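(* For every balanced word $X$, the reduction algorithm applied to $X$ terminates after finitely many steps.
   Context: Words are finite products of the letters $L,R$; a subword is a contiguous block of letters. A word is balanced if it contains equally many $L$'s and $R$'s. A word is prime if it is nonempty, balanced, and not a product of two nonempty balanced words. For a balanced word $W=a_1\cdots a_n$, $e_k(W)=\sum_{i=1}^k\overline{a_i}$ with $\overline{R}=1$, $\overline{L}=-1$. A prime $P$ of length $n$ is an upper prime if $e_k(P)>0$ for $1\le k\le n-1$, and a lower prime if $e_k(P)<0$ for $1\le k\le n-1$. A word is reduced if it contains no subword $UD$ with $U$ an upper prime and $D$ a lower prime. The reduction algorithm: set $X_0=X$. For $i\ge 0$, if $X_i$ is reduced, stop and output $X_i$; otherwise take the leftmost occurrence of a subword of the form $UD$ ($U$ upper prime, $D$ lower prime), write $X_i=W_1UDW_2$ accordingly, and set $X_{i+1}=W_1DUW_2$. *)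

theory Defs
  imports Main
begin

datatype letter = L | R

type_synonym word = "letter list"

definition lval :: "letter \<Rightarrow> int" where
  "lval a = (if a = R then 1 else -1)"

definition e :: "nat \<Rightarrow> word \<Rightarrow> int" where
  "e k W = (\<Sum>a\<leftarrow>take k W. lval a)"

definition balanced :: "word \<Rightarrow> bool" where
  "balanced W \<longleftrightarrow> length (filter (\<lambda>a. a = L) W) = length (filter (\<lambda>a. a = R) W)"

definition prime_word :: "word \<Rightarrow> bool" where
  "prime_word W \<longleftrightarrow> W \<noteq> [] \<and> balanced W \<and>
     \<not> (\<exists>U V. U \<noteq> [] \<and> V \<noteq> [] \<and> balanced U \<and> balanced V \<and> W = U @ V)"

definition upper_prime :: "word \<Rightarrow> bool" where
  "upper_prime P \<longleftrightarrow> prime_word P \<and> (\<forall>k. 1 \<le> k \<and> k \<le> length P - 1 \<longrightarrow> e k P > 0)"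

definition lower_prime :: "word \<Rightarrow> bool" where
  "lower_prime P \<longleftrightarrow> prime_word P \<and> (\<forall>k. 1 \<le> k \<and> k \<le> length P - 1 \<longrightarrow> e k P < 0)"

definition reduced :: "word \<Rightarrow> bool" where
  "reduced X \<longleftrightarrow> \<not> (\<exists>W1 U D W2. X = W1 @ U @ D @ W2 \<and> upper_prime U \<and> lower_prime D)"

definition red_step :: "word \<Rightarrow> word \<Rightarrow> bool" where
  "red_step X Y \<longleftrightarrow> \<not> reduced X \<and>
     (\<exists>W1 U D W2. X = W1 @ U @ D @ W2 \<and> upper_prime U \<and> lower_prime D \<and>
        (\<forall>W1' U' D' W2'. X = W1' @ U' @ D' @ W2' \<and> upper_prime U' \<and> lower_prime D'
            \<longrightarrow> length W1 \<le> length W1') \<and>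
        Y = W1 @ D @ U @ W2)"

end

theory Submission
  imports Defs
begin

text \<open>Read a word as a binary numeral with digit 1 for \<open>R\<close> and 0 for \<open>L\<close>.
  An upper prime starts with \<open>R\<close> and a lower prime with \<open>L\<close>, so replacing a
  subword \<open>UD\<close> by \<open>DU\<close> of the same length lowers the leading digit of that block
  from 1 to 0 and hence strictly decreases the value. A sequence of reduction steps
  is therefore a strictly decreasing sequence of natural numbers, which must be
  finite.\<close>

fun bin_val :: "word \<Rightarrow> nat" where
  "bin_val [] = 0"
| "bin_val (a # w) = (if a = R then 2 ^ length w else 0) + bin_val w"

lemma bin_val_less: "bin_val w < 2 ^ length w"
  by (induction w) auto

lemma bin_val_append: "bin_val (xs @ ys) = bin_val xs * 2 ^ length ys + bin_val ys"
  by (induction xs) (auto simp: power_add algebra_simps)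

lemma bin_val_L_less_R:
  assumes "length xs = length ys"
  shows "bin_val (L # xs) < bin_val (R # ys)"
  using bin_val_less[of xs] assms by simp

lemma bin_val_append_mono_strict:
  assumes "length A = length B" and "bin_val A < bin_val B"
  shows "bin_val (W1 @ A @ W2) < bin_val (W1 @ B @ W2)"
proof -
  have "bin_val (W1 @ A) < bin_val (W1 @ B)"
    using assms by (simp add: bin_val_append)
  then show ?thesis
    unfolding append_assoc[symmetric] bin_val_append[of "W1 @ A"] bin_val_append[of "W1 @ B"]
    by simp
qed

lemma balanced_nonempty_length_ge_2:
  assumes "balanced W" and "W \<noteq> []"
  shows "2 \<le> length W"
proof (rule ccontr)
  assume "\<not> 2 \<le> length W"
  with assms(2) obtain a where "W = [a]"
    by (cases W) (auto simp: Suc_le_eq)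
  with assms(1) show False
    by (cases a) (auto simp: balanced_def)
qed

lemma prime_word_Cons:
  assumes "prime_word P"
  obtains a P' where "P = a # P'" and "e 1 P = lval a" and "1 \<le> length P - 1"
proof -
  have "2 \<le> length P"
    using assms balanced_nonempty_length_ge_2 by (auto simp: prime_word_def)
  then show ?thesis
    using that by (cases P) (auto simp: e_def)
qed

lemma upper_prime_Cons_R:
  assumes "upper_prime U"
  obtains U' where "U = R # U'"
proof -
  obtain a U' where "U = a # U'" "e 1 U = lval a" "1 \<le> length U - 1"
    using assms prime_word_Cons by (auto simp: upper_prime_def)
  with assms that show ?thesis
    by (cases a) (auto simp: upper_prime_def lval_def)
qed

lemma lower_prime_Cons_L:
  assumes "lower_prime D"
  obtains D' where "D = L # D'"
proof -
  obtain a D' where "D = a # D'" "e 1 D = lval a" "1 \<le> length D - 1"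
    using assms prime_word_Cons by (auto simp: lower_prime_def)
  with assms that show ?thesis
    by (cases a) (auto simp: lower_prime_def lval_def)
qed

lemma bin_val_swap_less:
  assumes "upper_prime U" and "lower_prime D"
  shows "bin_val (D @ U) < bin_val (U @ D)"
proof -
  obtain U' where U: "U = R # U'"
    using assms(1) by (rule upper_prime_Cons_R)
  obtain D' where D: "D = L # D'"
    using assms(2) by (rule lower_prime_Cons_L)
  have "D @ U = L # (D' @ U)" and "U @ D = R # (U' @ D)"
    using U D by simp_all
  moreover have "length (D' @ U) = length (U' @ D)"
    using U D by simp
  ultimately show ?thesis
    by (metis bin_val_L_less_R)
qed

lemma red_step_bin_val_less:
  assumes "red_step X Y"
  shows "bin_val Y < bin_val X"
proof -
  obtain W1 U D W2 where "X = W1 @ U @ D @ W2" and "Y = W1 @ D @ U @ W2"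
    and "upper_prime U" and "lower_prime D"
    using assms unfolding red_step_def by blast
  then show ?thesis
    using bin_val_append_mono_strict[of "D @ U" "U @ D" W1 W2] bin_val_swap_less
    by simp
qed

theorem proposition6p7:
  fixes X :: word
  assumes "balanced X"
  shows "\<not> (\<exists>f :: nat \<Rightarrow> word. f 0 = X \<and> (\<forall>i. red_step (f i) (f (Suc i))))"
proof -
  have "red_step Y Z \<Longrightarrow> (Z, Y) \<in> measure bin_val" for Y Z
    using red_step_bin_val_less by simp
  then show ?thesis
    using wf_iff_no_infinite_down_chain[THEN iffD1, OF wf_measure[of bin_val]] by blast
qed

end
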